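(* Let $\phi$ be an orientation-preserving isometry of a spin, closed, hyperbolic $2$-manifold $M=\Gamma\backslash H^2$, and let $\hat\phi$ be a lift of $\phi$ to a symmetry of a spin structure $\hat\Gamma\backslash\mathrm{SU}(1,1;\mathbb C)$ on $M$. Let $f\in\mathrm{SO}^+(2,1)$ with $\phi=f_\star$, and let $\hat f\in\mathrm{SU}(1,1;\mathbb C)$ be the lift of $f$ with $\hat\phi=\hat f_\star$. Let $P$ be an isolated fixed point of $\phi$, and let $x\in H^2$ with $\Gamma x=P$. Let $g\in\mathrm{SO}^+(2,1)$ with $ge_3=x$, and let $\hat g\in\mathrm{SU}(1,1;\mathbb C)$ be a lift of $g$. Let $\gamma$ be the unique element of $\Gamma$ such that $\gamma fx=x$, and let $\hat\gamma$ be the unique element of $\hat\Gamma$ lifting $\gamma$. Then $\hat g^{-1}\hat\gamma\hat f\hat g=\mathrm{diag}(u,\overline u)$ with $u$ a unit complex number, and $$\nu(\hat\phi,P)=\frac{1}{2\,\mathrm{Im}(u)\mathbf i}.$$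
   Context: $\mathrm{SU}(1,1;\mathbb C)=\{A\in\mathbb C(2):A^*JA=J,\ \det A=1\}$, $J=\mathrm{diag}(1,-1)$, acts on $B^2=\{z\in\mathbb C:|z|<1\}$ by $\begin{pmatrix}a&b\\c&d\end{pmatrix}\cdot z=(az+b)(cz+d)^{-1}$. Let $H^2=\{x\in\mathbb R^3:x_1^2+x_2^2-x_3^2=-1,\ x_3>0\}$ and $\zeta:B^2\to H^2$, $\zeta(z)=(2z/(1-|z|^2),(1+|z|^2)/(1-|z|^2))$ (identifying $z_1+z_2\mathbf i$ with $(z_1,z_2)$). The double covering epimorphism $\eta:\mathrm{SU}(1,1;\mathbb C)\to\mathrm{SO}^+(2,1)$ (representing $\mathrm{Spin}^+(2,1)$) is characterized by $\zeta(A\cdot z)=\eta(A)\zeta(z)$. $\Gamma\subset\mathrm{SO}^+(2,1)$ is discrete and torsion-free with $M$ closed, and $\hat\Gamma\subset\mathrm{SU}(1,1;\mathbb C)$ maps isomorphically onto $\Gamma$. Isometries $f_\star(\Gamma x)=\Gamma fx$ ($f$ normalizing $\Gamma$), symmetries $\hat f_\star(\hat\Gamma\hat h)=\hat\Gamma\hat f\hat h$ ($\hat f$ normalizing $\hat\Gamma$). $\mathrm{Spin}(2)=\eta^{-1}(\mathrm{Stab}(e_3))=\{\mathrm{diag}(u,\overline u):|u|=1\}$ with half-spin representations (Atiyah–Bott convention) $\Delta_2^+(\mathrm{diag}(u,\overline u))=\overline u$, $\Delta_2^-(\mathrm{diag}(u,\overline u))=u$. If $\hat\phi=\hat f_\star$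 and $P=\Gamma ge_3$ with $\hat g$ a lift of $g$, there is a unique $s\in\mathrm{Spin}(2)$ with $\hat\Gamma\hat f\hat g=\hat\Gamma\hat gs$, and the local contribution of the isolated fixed point $P$ to the Atiyah–Singer $G$-spin formula is $\nu(\hat\phi,P)=\dfrac{\mathrm{tr}\,\Delta_2^+(s)-\mathrm{tr}\,\Delta_2^-(s)}{|\det(I-d\phi_P)|}$. *)

theory Defs
  imports "HOL-Analysis.Analysis"
begin

definition Jm :: "real^3^3" where
  "Jm = (\<chi> i j. if i = j then (if i = 3 then -1 else 1) else 0)"

definition e1 :: "real^3" where "e1 = axis 1 1"
definition e2 :: "real^3" where "e2 = axis 2 1"
definition e3 :: "real^3" where "e3 = axis 3 1"

definition SO21p :: "(real^3^3) set" where
  "SO21p = {A. transpose A ** Jm ** A = Jm \<and> det A = 1 \<and> A $ 3 $ 3 > 0}"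

definition H2 :: "(real^3) set" where
  "H2 = {x. (x$1)^2 + (x$2)^2 - (x$3)^2 = -1 \<and> x$3 > 0}"

definition Jc :: "complex^2^2" where
  "Jc = (\<chi> i j. if i = j then (if i = 2 then -1 else 1) else 0)"

definition ctrans :: "complex^2^2 \<Rightarrow> complex^2^2" where
  "ctrans A = (\<chi> i j. cnj (A $ j $ i))"

definition SU11 :: "(complex^2^2) set" where
  "SU11 = {A. ctrans A ** Jc ** A = Jc \<and> det A = 1}"

definition mobius :: "complex^2^2 \<Rightarrow> complex \<Rightarrow> complex" where
  "mobius A z = (A$1$1 * z + A$1$2) / (A$2$1 * z + A$2$2)"

definition zeta :: "complex \<Rightarrow> real^3" where
  "zeta z = vector [2 * Re z / (1 - (cmod z)^2), 2 * Im z / (1 - (cmod z)^2),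
                    (1 + (cmod z)^2) / (1 - (cmod z)^2)]"

definition eta :: "complex^2^2 \<Rightarrow> real^3^3" where
  "eta A = (THE R. R \<in> SO21p \<and> (\<forall>z. cmod z < 1 \<longrightarrow> zeta (mobius A z) = R *v zeta z))"

definition cdiag :: "complex \<Rightarrow> complex \<Rightarrow> complex^2^2" where
  "cdiag a b = (\<chi> i j. if i = j then (if i = 1 then a else b) else 0)"

definition Spin2 :: "(complex^2^2) set" where
  "Spin2 = {cdiag u (cnj u) | u. cmod u = 1}"

text \<open>Half-spin representations of Spin(2) (Atiyah--Bott convention); both are one-dimensional,
  so the trace is the value itself.\<close>
definition Delta_plus :: "complex^2^2 \<Rightarrow> complex" where "Delta_plus s = cnj (s $ 1 $ 1)"
definition Delta_minus :: "complex^2^2 \<Rightarrow> complex" where "Delta_minus s = s $ 1 $ 1"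

definition mat_pow :: "'a::semiring_1^'n^'n \<Rightarrow> nat \<Rightarrow> 'a^'n^'n" where
  "mat_pow A n = ((\<lambda>B. A ** B) ^^ n) (mat 1)"

definition matgroup :: "('a::semiring_1^'n^'n) set \<Rightarrow> ('a^'n^'n) set \<Rightarrow> bool" where
  "matgroup G S \<longleftrightarrow> G \<subseteq> S \<and> mat 1 \<in> G \<and> (\<forall>A\<in>G. \<forall>B\<in>G. A ** B \<in> G)
      \<and> (\<forall>A\<in>G. matrix_inv A \<in> G)"

text \<open>Gamma: discrete, torsion-free subgroup of SO+(2,1) with Gamma\H^2 compact (closed).
  Compactness of the quotient is expressed as: some compact subset of H^2 meets every orbit.\<close>
definition cocompact_torsionfree_lattice :: "(real^3^3) set \<Rightarrow> bool" where
  "cocompact_torsionfree_lattice \<Gamma> \<longleftrightarrow>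
     matgroup \<Gamma> SO21p
   \<and> (\<forall>A\<in>\<Gamma>. \<exists>e>0. \<forall>B\<in>\<Gamma>. dist B A < e \<longrightarrow> B = A)
   \<and> (\<forall>A\<in>\<Gamma>. \<forall>n>0. mat_pow A n = mat 1 \<longrightarrow> A = mat 1)
   \<and> (\<exists>K. compact K \<and> K \<subseteq> H2 \<and> (\<forall>y\<in>H2. \<exists>\<gamma>\<in>\<Gamma>. \<gamma> *v y \<in> K))"

definition normalizes :: "'a::semiring_1^'n^'n \<Rightarrow> ('a^'n^'n) set \<Rightarrow> bool" where
  "normalizes f G \<longleftrightarrow> (\<lambda>A. f ** A ** matrix_inv f) ` G = G"

definition lcoset :: "('a::semiring_1^'n^'n) set \<Rightarrow> 'a^'n^'n \<Rightarrow> ('a^'n^'n) set" where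
  "lcoset G A = (\<lambda>B. B ** A) ` G"

text \<open>P = Gamma (g e3).  Near P the isometry phi = f_star is represented on H^2 by the
  linear isometry L = gamma f, where gamma is the element of Gamma with gamma f x = x, x = g e3.
  Its differential at x is L restricted to T_x H^2 = span(g e1, g e2).  In the basis
  (g e1, g e2) this is the upper-left 2x2 block of g^-1 L g; we return det(I - d phi_P).\<close>
definition det_I_minus_dphi :: "(real^3^3) set \<Rightarrow> real^3^3 \<Rightarrow> real^3^3 \<Rightarrow> real" where
  "det_I_minus_dphi \<Gamma> f g =
     (let x = g *v e3;
          \<gamma> = (THE \<gamma>. \<gamma> \<in> \<Gamma> \<and> \<gamma> *v (f *v x) = x);
          A = matrix_inv g ** (\<gamma> ** f) ** g
      in (1 - A$1$1) * (1 - A$2$2) - A$1$2 * A$2$1)"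

definition spin_s :: "(complex^2^2) set \<Rightarrow> complex^2^2 \<Rightarrow> complex^2^2 \<Rightarrow> complex^2^2" where
  "spin_s \<Gamma>h fh gh = (THE s. s \<in> Spin2 \<and> lcoset \<Gamma>h (fh ** gh) = lcoset \<Gamma>h (gh ** s))"

definition nu :: "(real^3^3) set \<Rightarrow> (complex^2^2) set \<Rightarrow> real^3^3 \<Rightarrow> complex^2^2
                   \<Rightarrow> real^3^3 \<Rightarrow> complex^2^2 \<Rightarrow> complex" where
  "nu \<Gamma> \<Gamma>h f fh g gh =
     (let s = spin_s \<Gamma>h fh gh
      in (Delta_plus s - Delta_minus s) / complex_of_real \<bar>det_I_minus_dphi \<Gamma> f g\<bar>)"

end

theory Submission
  imports Defs
begin

(* Writing an element of SU(1,1) as [[a, b], [cnj b, cnj a]] with |a|^2 - |b|^2 = 1, the covering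
  map eta becomes an explicit quadratic expression in a and b; hence eta is a homomorphism, and
  the preimage under eta of the stabiliser of e3 is Spin(2). As g^-1 gamma f g fixes e3, its lift
  s = gh^-1 gammah fh gh is diag(u, cnj u), and eta s is the rotation about e3 through twice the
  argument of u. So det(I - d phi_P) = |1 - u^2|^2 = 4 (Im u)^2, whereas
  Delta+(s) - Delta-(s) = cnj u - u = -2 i Im u.
  That s and gamma are the elements singled out in the definitions of nu and of d phi_P rests on
  Gamma acting freely on H^2: an element fixing a point is conjugate to a rotation, so some of
  its powers come arbitrarily close to the identity; by discreteness one of them is the identity,
  and Gamma is torsion-free. *)

lemma matrix_inv_unique:
  fixes A B :: "'a::comm_ring_1^'n^'n"
  assumes "A ** B = mat 1" "B ** A = mat 1"
  shows "matrix_inv A = B"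
  unfolding matrix_inv_def
proof (rule some_equality)
  fix A' assume "A ** A' = mat 1 \<and> A' ** A = mat 1"
  then show "A' = B"
    using assms(1) by (metis matrix_mul_assoc matrix_mul_lid matrix_mul_rid)
qed (use assms in simp)

lemma matrix_inv_left: "invertible A \<Longrightarrow> matrix_inv A ** A = mat 1"
  and matrix_inv_right: "invertible A \<Longrightarrow> A ** matrix_inv A = mat 1"
  unfolding matrix_inv_def invertible_def by (metis (mono_tags, lifting) someI_ex)+

lemma invertible_mult_left_cancel:
  assumes "invertible A" "A ** B = A ** C"
  shows "B = C"
  by (metis assms matrix_inv_left matrix_mul_assoc matrix_mul_lid)

lemma matrix_vector_mult_3_nth:
  "((R::'a::semiring_1^3^'m) *v v) $ i = R$i$1 * v$1 + R$i$2 * v$2 + R$i$3 * v$3"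
  by (simp add: matrix_vector_mult_def sum_3)

lemma tendsto_matrix_mult_const:
  fixes A :: "'k \<Rightarrow> real^'n^'m"
  assumes "(A \<longlongrightarrow> A0) F"
  shows "((\<lambda>k. B ** A k ** C) \<longlongrightarrow> B ** A0 ** C) F"
  unfolding matrix_matrix_mult_def
  by (auto intro!: tendsto_intros assms)

lemma matgroupD:
  assumes "matgroup G S"
  shows "G \<subseteq> S" "mat 1 \<in> G" "A \<in> G \<Longrightarrow> B \<in> G \<Longrightarrow> A ** B \<in> G" "A \<in> G \<Longrightarrow> matrix_inv A \<in> G"
  using assms by (auto simp: matgroup_def)

lemma lcoset_mult_member:
  fixes G :: "('a::field^'n^'n) set"
  assumes "matgroup G S" "c \<in> G" "invertible c"
  shows "lcoset G (c ** M) = lcoset G M"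
proof -
  have "(\<lambda>B. B ** c) ` G = G"
  proof
    show "(\<lambda>B. B ** c) ` G \<subseteq> G" using matgroupD(3)[OF assms(1) _ assms(2)] by blast
    show "G \<subseteq> (\<lambda>B. B ** c) ` G"
    proof
      fix B assume "B \<in> G"
      then have "B ** matrix_inv c \<in> G" "B = (B ** matrix_inv c) ** c"
        using matgroupD(3,4)[OF assms(1)] assms(2) matrix_inv_left[OF assms(3)]
        by (auto simp: matrix_mul_assoc[symmetric])
      then show "B \<in> (\<lambda>B. B ** c) ` G" by blast
    qed
  qed
  then have "(\<lambda>B. B ** M) ` G = (\<lambda>B. B ** M) ` (\<lambda>B. B ** c) ` G" by simp
  then show ?thesis unfolding lcoset_def image_image by (simp add: matrix_mul_assoc)
qed

lemma mat_pow_0 [simp]: "mat_pow A 0 = mat 1"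
  and mat_pow_Suc: "mat_pow A (Suc n) = A ** mat_pow A n"
  by (simp_all add: mat_pow_def)

lemma matgroup_mat_pow: "matgroup G S \<Longrightarrow> A \<in> G \<Longrightarrow> mat_pow A n \<in> G"
  by (induction n) (auto simp: mat_pow_Suc matgroup_def)

lemma mat_pow_conjugate:
  assumes "B ** C = mat 1" "C ** B = mat 1"
  shows "mat_pow (B ** A ** C) n = B ** mat_pow A n ** C"
proof (induction n)
  case (Suc n)
  have "B ** A ** C ** (B ** mat_pow A n ** C) = B ** A ** (C ** B) ** mat_pow A n ** C"
    by (simp add: matrix_mul_assoc)
  then show ?case using Suc assms(2) by (simp add: mat_pow_Suc matrix_mul_assoc)
qed (use assms(1) in simp)

section \<open>SU(1,1) as a set of matrices\<close>

definition su11_mat :: "complex \<Rightarrow> complex \<Rightarrow> complex^2^2" where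
  "su11_mat a b = vector [vector [a, b], vector [cnj b, cnj a]]"

definition su11_pair :: "complex \<Rightarrow> complex \<Rightarrow> bool" where
  "su11_pair a b \<longleftrightarrow> (cmod a)^2 - (cmod b)^2 = 1"

lemma su11_mat_nth [simp]:
  "su11_mat a b $ 1 $ 1 = a" "su11_mat a b $ 1 $ 2 = b"
  "su11_mat a b $ 2 $ 1 = cnj b" "su11_mat a b $ 2 $ 2 = cnj a"
  by (simp_all add: su11_mat_def)

lemma su11_pair_Re_Im: "su11_pair a b \<longleftrightarrow> (Re a)^2 + (Im a)^2 - (Re b)^2 - (Im b)^2 = 1"
  by (simp add: su11_pair_def cmod_power2 diff_diff_eq)

lemma su11_pair_cnj: "su11_pair a b \<longleftrightarrow> a * cnj a - b * cnj b = 1"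
  by (simp add: su11_pair_Re_Im complex_eq_iff power2_eq_square diff_diff_eq)

lemma su11_pair_cnj_uminus [simp]: "su11_pair (cnj a) (- b) = su11_pair a b"
  by (simp add: su11_pair_def)

lemma su11_pair_unit: "su11_pair u 0 \<longleftrightarrow> cmod u = 1"
  by (simp add: su11_pair_def abs_square_eq_1)

lemma su11_mat_mult: "su11_mat a b ** su11_mat c d = su11_mat (a*c + b*cnj d) (a*d + b*cnj c)"
  by (simp add: vec_eq_iff forall_2 matrix_matrix_mult_def sum_2 mult.commute)

lemma su11_pair_mult:
  assumes "su11_pair a b" "su11_pair c d"
  shows "su11_pair (a*c + b*cnj d) (a*d + b*cnj c)"
proof -
  have "(cmod (a*c + b*cnj d))^2 - (cmod (a*d + b*cnj c))^2
      = ((cmod a)^2 - (cmod b)^2) * ((cmod c)^2 - (cmod d)^2)"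
    unfolding cmod_power2 by (simp add: power2_eq_square algebra_simps)
  then show ?thesis using assms by (simp add: su11_pair_def)
qed

lemma su11_mat_one: "su11_mat 1 0 = mat 1"
  by (simp add: vec_eq_iff forall_2 mat_def)

lemma su11_mat_cdiag: "su11_mat u 0 = cdiag u (cnj u)"
  by (simp add: vec_eq_iff forall_2 cdiag_def)

lemma su11_mat_inverse:
  assumes "su11_pair a b"
  shows "su11_mat a b ** su11_mat (cnj a) (- b) = mat 1" "su11_mat (cnj a) (- b) ** su11_mat a b = mat 1"
proof -
  have "a * cnj a - b * cnj b = 1" using assms by (simp add: su11_pair_cnj)
  then show "su11_mat a b ** su11_mat (cnj a) (- b) = mat 1" "su11_mat (cnj a) (- b) ** su11_mat a b = mat 1"
    unfolding su11_mat_mult su11_mat_one[symmetric] by (simp_all add: mult.commute)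
qed

lemma matrix_inv_su11_mat: "su11_pair a b \<Longrightarrow> matrix_inv (su11_mat a b) = su11_mat (cnj a) (- b)"
  by (simp add: matrix_inv_unique su11_mat_inverse)

lemma su11_mat_SU11: "su11_pair a b \<Longrightarrow> su11_mat a b \<in> SU11"
  by (simp add: SU11_def su11_pair_cnj vec_eq_iff forall_2 matrix_matrix_mult_def sum_2
      ctrans_def Jc_def det_2 mult.commute) (metis minus_diff_eq)

lemma SU11_cases:
  assumes "A \<in> SU11"
  obtains a b where "A = su11_mat a b" "su11_pair a b"
proof -
  define a b c d where "a = A$1$1" "b = A$1$2" "c = A$2$1" "d = A$2$2"
  have M: "ctrans A ** Jc ** A = Jc" and D: "det A = 1" using assms by (auto simp: SU11_def)
  have e11: "cnj a * a - cnj c * c = 1"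
    using arg_cong[OF M, of "\<lambda>M. M$1$1"]
    by (simp add: matrix_matrix_mult_def sum_2 Jc_def ctrans_def a_b_c_d_def)
  have e12: "cnj a * b - cnj c * d = 0"
    using arg_cong[OF M, of "\<lambda>M. M$1$2"]
    by (simp add: matrix_matrix_mult_def sum_2 Jc_def ctrans_def a_b_c_d_def)
  have "a * d - b * c = 1" using D by (simp add: det_2 a_b_c_d_def)
  then have d: "d = cnj a" using e11 e12 by algebra
  have "a \<noteq> 0"
  proof
    assume "a = 0"
    then have "- (Re c * Re c) - Im c * Im c = 1" using e11 by (simp add: complex_eq_iff)
    moreover have "0 \<le> Re c * Re c + Im c * Im c" by simp
    ultimately show False by linarith
  qed
  then have c: "c = cnj b" using e12 d by (simp add: right_diff_distrib[symmetric])
  have "A = su11_mat a b"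
    by (simp add: vec_eq_iff forall_2 a_b_c_d_def c[unfolded a_b_c_d_def] d[unfolded a_b_c_d_def])
  moreover have "su11_pair a b"
    using e11 c by (simp add: su11_pair_cnj mult.commute)
  ultimately show ?thesis using that by blast
qed

lemma SU11_mult: "A \<in> SU11 \<Longrightarrow> B \<in> SU11 \<Longrightarrow> A ** B \<in> SU11"
  by (elim SU11_cases) (simp add: su11_mat_mult su11_pair_mult su11_mat_SU11)

lemma SU11_matrix_inv: "A \<in> SU11 \<Longrightarrow> matrix_inv A \<in> SU11"
  by (elim SU11_cases) (simp add: matrix_inv_su11_mat su11_mat_SU11)

lemma SU11_invertible: "A \<in> SU11 \<Longrightarrow> invertible A"
  by (simp add: SU11_def invertible_det_nz)

lemma Spin2_eq: "Spin2 = {su11_mat u 0 | u. cmod u = 1}"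
  by (simp add: Spin2_def su11_mat_cdiag)

lemma Spin2_subset_SU11: "Spin2 \<subseteq> SU11"
  by (auto simp: Spin2_eq su11_pair_unit intro: su11_mat_SU11)

lemma su11_mat_Spin2_iff: "su11_mat a b \<in> Spin2 \<longleftrightarrow> b = 0 \<and> cmod a = 1"
  by (auto simp: Spin2_eq vec_eq_iff forall_2)

section \<open>The covering map eta\<close>

definition lorentz_mat :: "complex \<Rightarrow> complex \<Rightarrow> real^3^3" where
  "lorentz_mat a b =
     vector [vector [Re (a*a + b*b), - Im (a*a - b*b), 2 * Re (a*b)],
             vector [Im (a*a + b*b), Re (a*a - b*b), 2 * Im (a*b)],
             vector [2 * Re (a * cnj b), - 2 * Im (a * cnj b), (cmod a)^2 + (cmod b)^2]]"

lemma lorentz_mat_nth [simp]: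
  "lorentz_mat a b $ 1 $ 1 = Re (a*a + b*b)" "lorentz_mat a b $ 1 $ 2 = - Im (a*a - b*b)"
  "lorentz_mat a b $ 1 $ 3 = 2 * Re (a*b)"
  "lorentz_mat a b $ 2 $ 1 = Im (a*a + b*b)" "lorentz_mat a b $ 2 $ 2 = Re (a*a - b*b)"
  "lorentz_mat a b $ 2 $ 3 = 2 * Im (a*b)"
  "lorentz_mat a b $ 3 $ 1 = 2 * Re (a * cnj b)" "lorentz_mat a b $ 3 $ 2 = - 2 * Im (a * cnj b)"
  "lorentz_mat a b $ 3 $ 3 = (Re a)^2 + (Im a)^2 + (Re b)^2 + (Im b)^2"
  by (simp_all add: lorentz_mat_def cmod_power2)

lemma lorentz_mat_mult: "lorentz_mat a b ** lorentz_mat c d = lorentz_mat (a*c + b*cnj d) (a*d + b*cnj c)"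
  by (simp add: vec_eq_iff forall_3 matrix_matrix_mult_def sum_3 power2_eq_square algebra_simps)

lemma lorentz_mat_one: "lorentz_mat 1 0 = mat 1"
  by (simp add: vec_eq_iff forall_3 mat_def)

lemma lorentz_mat_SO21p:
  assumes "su11_pair a b"
  shows "lorentz_mat a b \<in> SO21p"
proof -
  define n where "n = (Re a)^2 + (Im a)^2 - (Re b)^2 - (Im b)^2"
  have n: "n = 1" using assms by (simp add: su11_pair_Re_Im n_def)
  have "transpose (lorentz_mat a b) ** Jm ** lorentz_mat a b = (\<chi> i j. n^2 * Jm$i$j)"
    by (simp add: vec_eq_iff forall_3 matrix_matrix_mult_def sum_3 Jm_def transpose_def n_def
        power2_eq_square algebra_simps)
  moreover have "det (lorentz_mat a b) = n^3"
    by (simp add: det_3 n_def power2_eq_square power3_eq_cube algebra_simps)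
  moreover have "lorentz_mat a b $ 3 $ 3 > 0"
    using n zero_le_power2[of "Re b"] zero_le_power2[of "Im b"] unfolding n_def lorentz_mat_nth
    by linarith
  ultimately show ?thesis using n by (simp add: SO21p_def vec_eq_iff)
qed

lemma SO21p_invertible: "A \<in> SO21p \<Longrightarrow> invertible A"
  by (simp add: SO21p_def invertible_det_nz)

lemma zeta_nth [simp]:
  "zeta z $ 1 = 2 * Re z / (1 - (cmod z)^2)" "zeta z $ 2 = 2 * Im z / (1 - (cmod z)^2)"
  "zeta z $ 3 = (1 + (cmod z)^2) / (1 - (cmod z)^2)"
  by (simp_all add: zeta_def)

lemma zeta_mobius_su11_mat:
  assumes "su11_pair a b" "cmod z < 1"
  shows "zeta (mobius (su11_mat a b) z) = lorentz_mat a b *v zeta z"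
proof -
  define N Dn where "N = a*z + b" and "Dn = cnj b * z + cnj a"
  define t where "t = 1 - (cmod z)^2"
  have t: "t > 0" using assms(2) unfolding t_def by (simp add: abs_square_less_1)
  have "(cmod Dn)^2 - (cmod N)^2 = ((Re a)^2 + (Im a)^2 - (Re b)^2 - (Im b)^2) * t"
    unfolding cmod_power2 t_def N_def Dn_def by (simp add: power2_eq_square algebra_simps)
  then have Dn_N: "(cmod Dn)^2 - (cmod N)^2 = t" using assms(1) by (simp add: su11_pair_Re_Im)
  then have Dn: "(cmod Dn)^2 > 0" using t by (smt (verit) zero_le_power2)
  define w where "w = N / Dn"
  have "(cmod w)^2 = (cmod N)^2 / (cmod Dn)^2" by (simp add: w_def norm_divide power_divide)
  then have w_minus: "1 - (cmod w)^2 = t / (cmod Dn)^2"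
    and w_plus: "1 + (cmod w)^2 = ((cmod Dn)^2 + (cmod N)^2) / (cmod Dn)^2"
    using Dn_N Dn by (simp_all add: field_simps)
  have "w = N * cnj Dn / complex_of_real ((cmod Dn)^2)"
    using Dn by (simp add: w_def complex_norm_square[symmetric] field_simps)
  then have Re_w: "Re w = Re (N * cnj Dn) / (cmod Dn)^2"
    and Im_w: "Im w = Im (N * cnj Dn) / (cmod Dn)^2"
    by (simp_all add: Re_divide_of_real Im_divide_of_real)
  have "zeta w $ 1 = 2 * Re (N * cnj Dn) / t"
    unfolding zeta_nth w_minus Re_w using Dn t by (simp add: field_simps)
  also have "2 * Re (N * cnj Dn) = lorentz_mat a b $1$1 * (2 * Re z)
      + lorentz_mat a b $1$2 * (2 * Im z) + lorentz_mat a b $1$3 * (1 + (cmod z)^2)"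
    unfolding cmod_power2 N_def Dn_def by (simp add: power2_eq_square algebra_simps)
  finally have 1: "zeta w $ 1 = (lorentz_mat a b *v zeta z) $ 1"
    using t by (simp only: matrix_vector_mult_3_nth zeta_nth t_def[symmetric]) (simp add: field_simps)
  have "zeta w $ 2 = 2 * Im (N * cnj Dn) / t"
    unfolding zeta_nth w_minus Im_w using Dn t by (simp add: field_simps)
  also have "2 * Im (N * cnj Dn) = lorentz_mat a b $2$1 * (2 * Re z)
      + lorentz_mat a b $2$2 * (2 * Im z) + lorentz_mat a b $2$3 * (1 + (cmod z)^2)"
    unfolding cmod_power2 N_def Dn_def by (simp add: power2_eq_square algebra_simps)
  finally have 2: "zeta w $ 2 = (lorentz_mat a b *v zeta z) $ 2"
    using t by (simp only: matrix_vector_mult_3_nth zeta_nth t_def[symmetric]) (simp add: field_simps)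
  have "zeta w $ 3 = ((cmod Dn)^2 + (cmod N)^2) / t"
    unfolding zeta_nth w_minus w_plus using Dn t by (simp add: field_simps)
  also have "(cmod Dn)^2 + (cmod N)^2 = lorentz_mat a b $3$1 * (2 * Re z)
      + lorentz_mat a b $3$2 * (2 * Im z) + lorentz_mat a b $3$3 * (1 + (cmod z)^2)"
    unfolding cmod_power2 N_def Dn_def by (simp add: power2_eq_square algebra_simps)
  finally have 3: "zeta w $ 3 = (lorentz_mat a b *v zeta z) $ 3"
    using t by (simp only: matrix_vector_mult_3_nth zeta_nth t_def[symmetric]) (simp add: field_simps)
  have "mobius (su11_mat a b) z = w" by (simp add: mobius_def w_def N_def Dn_def)
  then show ?thesis using 1 2 3 by (simp add: vec_eq_iff forall_3)
qed

lemma zeta_action_unique: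
  fixes R R' :: "real^3^'m"
  assumes "\<And>z. cmod z < 1 \<Longrightarrow> R *v zeta z = R' *v zeta z"
  shows "R = R'"
proof -
  have h: "R$i$1 * zeta z$1 + R$i$2 * zeta z$2 + R$i$3 * zeta z$3
      = R'$i$1 * zeta z$1 + R'$i$2 * zeta z$2 + R'$i$3 * zeta z$3" if "cmod z < 1" for z i
    using arg_cong[OF assms[OF that], of "\<lambda>v. v $ i"] unfolding matrix_vector_mult_3_nth .
  have z1: "zeta (1/2) $ 1 = 4/3" "zeta (1/2) $ 2 = 0" "zeta (1/2) $ 3 = 5/3"
    by (simp_all add: power2_eq_square)
  have z2: "zeta (\<i>/2) $ 1 = 0" "zeta (\<i>/2) $ 2 = 4/3" "zeta (\<i>/2) $ 3 = 5/3"
    by (simp_all add: power2_eq_square norm_divide)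
  have "R$i$j = R'$i$j" for i j
  proof -
    have 3: "R$i$3 = R'$i$3" using h[of 0 i] by simp
    have "4/3 * R$i$1 + 5/3 * R$i$3 = 4/3 * R'$i$1 + 5/3 * R'$i$3"
      using h[of "1/2" i] unfolding z1 by simp
    moreover have "4/3 * R$i$2 + 5/3 * R$i$3 = 4/3 * R'$i$2 + 5/3 * R'$i$3"
      using h[of "\<i>/2" i] unfolding z2 by (simp add: norm_divide)
    ultimately have "R$i$1 = R'$i$1" "R$i$2 = R'$i$2" using 3 by linarith+
    then show ?thesis using 3 exhaust_3[of j] by auto
  qed
  then show ?thesis by (simp add: vec_eq_iff)
qed

lemma eta_su11_mat:
  assumes "su11_pair a b"
  shows "eta (su11_mat a b) = lorentz_mat a b"
  unfolding eta_def
proof (rule the_equality)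
  show "lorentz_mat a b \<in> SO21p \<and>
      (\<forall>z. cmod z < 1 \<longrightarrow> zeta (mobius (su11_mat a b) z) = lorentz_mat a b *v zeta z)"
    using lorentz_mat_SO21p zeta_mobius_su11_mat assms by blast
  fix R
  assume "R \<in> SO21p \<and> (\<forall>z. cmod z < 1 \<longrightarrow> zeta (mobius (su11_mat a b) z) = R *v zeta z)"
  then show "R = lorentz_mat a b"
    using zeta_mobius_su11_mat[OF assms] by (intro zeta_action_unique) auto
qed

lemma eta_mult: "A \<in> SU11 \<Longrightarrow> B \<in> SU11 \<Longrightarrow> eta (A ** B) = eta A ** eta B"
  by (elim SU11_cases) (simp add: su11_mat_mult su11_pair_mult eta_su11_mat lorentz_mat_mult)

lemma eta_one: "eta (mat 1) = mat 1"
  using eta_su11_mat[of 1 0] by (simp add: su11_mat_one lorentz_mat_one su11_pair_def)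

lemma eta_matrix_inv: "A \<in> SU11 \<Longrightarrow> eta (matrix_inv A) = matrix_inv (eta A)"
  using eta_mult[of A "matrix_inv A"] eta_mult[of "matrix_inv A" A]
  by (simp add: SU11_matrix_inv SU11_invertible matrix_inv_left matrix_inv_right eta_one
      matrix_inv_unique)

lemma e3_nth [simp]: "e3 $ 1 = 0" "e3 $ 2 = 0" "e3 $ 3 = 1"
  by (simp_all add: e3_def axis_def)

lemma lorentz_mat_fixes_e3_iff:
  assumes "su11_pair a b"
  shows "lorentz_mat a b *v e3 = e3 \<longleftrightarrow> b = 0 \<and> cmod a = 1"
proof
  assume fixes_e3: "lorentz_mat a b *v e3 = e3"
  have "Re (a*b) = 0" "Im (a*b) = 0"
    using arg_cong[OF fixes_e3, of "\<lambda>v. v$1"] arg_cong[OF fixes_e3, of "\<lambda>v. v$2"]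
    by (simp_all add: matrix_vector_mult_3_nth)
  then have "a * b = 0" by (simp add: complex_eq_iff)
  moreover have "a \<noteq> 0"
    using assms by (auto simp: su11_pair_def) (smt (verit) zero_le_power2)
  ultimately show "b = 0 \<and> cmod a = 1" using assms by (auto simp: su11_pair_unit)
next
  assume "b = 0 \<and> cmod a = 1"
  then show "lorentz_mat a b *v e3 = e3"
    by (simp add: vec_eq_iff forall_3 matrix_vector_mult_3_nth cmod_power2[symmetric])
qed

lemma SU11_fixes_e3_iff:
  assumes "A \<in> SU11"
  shows "eta A *v e3 = e3 \<longleftrightarrow> A \<in> Spin2"
  using assms
  by (elim SU11_cases) (simp add: eta_su11_mat lorentz_mat_fixes_e3_iff su11_mat_Spin2_iff)

lemma eta_cdiag: "cmod u = 1 \<Longrightarrow> eta (cdiag u (cnj u)) = lorentz_mat u 0"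
  by (simp add: su11_mat_cdiag[symmetric] eta_su11_mat su11_pair_unit)

section \<open>Gamma acts freely on H^2\<close>

lemma discrete_torsionfree_eq_one:
  fixes \<Gamma> :: "(real^'n^'n) set"
  assumes "matgroup \<Gamma> S"
    and discrete: "\<forall>A\<in>\<Gamma>. \<exists>e>0. \<forall>B\<in>\<Gamma>. dist B A < e \<longrightarrow> B = A"
    and torsionfree: "\<forall>A\<in>\<Gamma>. \<forall>n>0. mat_pow A n = mat 1 \<longrightarrow> A = mat 1"
    and "\<delta> \<in> \<Gamma>" "\<forall>k. 0 < m k" "(\<lambda>k. mat_pow \<delta> (m k)) \<longlonglongrightarrow> mat 1"
  shows "\<delta> = mat 1"
proof -
  obtain e where "e > 0" and e: "\<forall>B\<in>\<Gamma>. dist B (mat 1) < e \<longrightarrow> B = mat 1"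
    using discrete matgroupD(2)[OF assms(1)] by blast
  then obtain k where "dist (mat_pow \<delta> (m k)) (mat 1) < e"
    using assms(6) by (meson LIMSEQ_iff_nz dist_commute le_refl)
  then have "mat_pow \<delta> (m k) = mat 1"
    using e matgroup_mat_pow[OF assms(1,4)] by blast
  then show ?thesis using torsionfree assms(4,5) by blast
qed

lemma unit_powers_tendsto_one:
  fixes v :: complex
  assumes "cmod v = 1"
  obtains m where "\<forall>k. 0 < m k" "(\<lambda>k. v ^ m k) \<longlonglongrightarrow> 1"
proof -
  have "\<forall>n. v ^ n \<in> sphere 0 1" using assms by (simp add: norm_power)
  then obtain l r where l: "l \<in> sphere 0 1" and r: "strict_mono r"
    and lim: "(\<lambda>k. v ^ r k) \<longlonglongrightarrow> l"
    using compact_sphere[of "0::complex" 1] unfolding compact_def o_def by metis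
  define m where "m k = r (Suc k) - r k" for k
  have "0 < m k" for k using r by (simp add: m_def strict_mono_def)
  moreover have "(\<lambda>k. v ^ m k) \<longlonglongrightarrow> l / l"
  proof -
    have "v \<noteq> 0" using assms by auto
    then have "v ^ m k = v ^ r (Suc k) / v ^ r k" for k
      using strict_mono_leD[OF r, of k "Suc k"] by (simp add: m_def power_diff)
    moreover have "(\<lambda>k. v ^ r (Suc k) / v ^ r k) \<longlonglongrightarrow> l / l"
      using LIMSEQ_Suc[OF lim] lim l by (intro tendsto_divide) auto
    ultimately show ?thesis by simp
  qed
  moreover have "l / l = 1" using l by auto
  ultimately show ?thesis using that by auto
qed

lemma mat_pow_lorentz_rotation: "mat_pow (lorentz_mat v 0) n = lorentz_mat (v ^ n) 0"
  by (induction n) (simp_all add: lorentz_mat_one mat_pow_Suc lorentz_mat_mult)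

lemma tendsto_lorentz_mat:
  assumes "(X \<longlongrightarrow> a) F" "(Y \<longlongrightarrow> b) F"
  shows "((\<lambda>k. lorentz_mat (X k) (Y k)) \<longlongrightarrow> lorentz_mat a b) F"
proof (intro vec_tendstoI)
  fix i j
  show "((\<lambda>k. lorentz_mat (X k) (Y k) $ i $ j) \<longlongrightarrow> lorentz_mat a b $ i $ j) F"
    using exhaust_3[of i] exhaust_3[of j]
    by (elim disjE) (auto intro!: tendsto_intros assms simp del: tendsto_vec_nth)
qed

lemma lattice_acts_freely:
  assumes \<Gamma>: "cocompact_torsionfree_lattice \<Gamma>" "\<Gamma> \<subseteq> eta ` SU11"
    and gh: "gh \<in> SU11"
    and \<delta>: "\<delta> \<in> \<Gamma>" "\<delta> *v (eta gh *v e3) = eta gh *v e3"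
  shows "\<delta> = mat 1"
proof -
  obtain dh where dh: "dh \<in> SU11" "\<delta> = eta dh" using \<Gamma>(2) \<delta>(1) by blast
  define g gi where "g = eta gh" and "gi = eta (matrix_inv gh)"
  have g_gi: "g ** gi = mat 1" "gi ** g = mat 1"
    using eta_mult[of gh "matrix_inv gh"] eta_mult[of "matrix_inv gh" gh] gh
    by (simp_all add: g_def gi_def SU11_matrix_inv SU11_invertible matrix_inv_left matrix_inv_right eta_one)
  define r where "r = matrix_inv gh ** dh ** gh"
  have r: "r \<in> SU11" "eta r = gi ** \<delta> ** g"
    using gh dh by (simp_all add: r_def SU11_mult SU11_matrix_inv eta_mult g_def gi_def)
  have "eta r *v e3 = gi *v (\<delta> *v (g *v e3))"
    by (simp add: r(2) matrix_vector_mul_assoc matrix_mul_assoc)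
  also have "\<dots> = (gi ** g) *v e3" using \<delta>(2) by (simp add: g_def matrix_vector_mul_assoc)
  finally have "r \<in> Spin2" using g_gi r(1) SU11_fixes_e3_iff by simp
  then obtain v where v: "cmod v = 1" "r = su11_mat v 0" by (auto simp: Spin2_eq)
  have "\<delta> = (g ** gi) ** \<delta> ** (g ** gi)" using g_gi by simp
  also have "\<dots> = g ** lorentz_mat v 0 ** gi"
    using v r(2) by (simp add: eta_su11_mat su11_pair_unit matrix_mul_assoc)
  finally have "mat_pow \<delta> n = g ** lorentz_mat (v ^ n) 0 ** gi" for n
    using g_gi by (simp add: mat_pow_conjugate mat_pow_lorentz_rotation)
  moreover obtain m where m: "\<forall>k. 0 < m k" "(\<lambda>k. v ^ m k) \<longlonglongrightarrow> 1"
    using unit_powers_tendsto_one[OF v(1)] by blast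
  ultimately have "(\<lambda>k. mat_pow \<delta> (m k)) \<longlonglongrightarrow> g ** lorentz_mat 1 0 ** gi"
    by (simp add: tendsto_matrix_mult_const tendsto_lorentz_mat)
  then have "(\<lambda>k. mat_pow \<delta> (m k)) \<longlonglongrightarrow> mat 1"
    using g_gi by (simp add: lorentz_mat_one)
  with \<Gamma>(1) \<delta>(1) m(1) show ?thesis
    unfolding cocompact_torsionfree_lattice_def by (blast intro: discrete_torsionfree_eq_one)
qed

section \<open>The local contribution\<close>

lemma spin_s_eqI:
  assumes \<Gamma>h: "matgroup \<Gamma>h SU11" "bij_betw eta \<Gamma>h \<Gamma>"
    and free: "\<forall>\<delta>\<in>\<Gamma>. \<delta> *v (eta gh *v e3) = eta gh *v e3 \<longrightarrow> \<delta> = mat 1"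
    and gh: "gh \<in> SU11" and \<gamma>h: "\<gamma>h \<in> \<Gamma>h"
    and s: "s \<in> Spin2" "gh ** s = \<gamma>h ** fh ** gh"
  shows "spin_s \<Gamma>h fh gh = s"
  unfolding spin_s_def
proof (rule the_equality)
  have "\<gamma>h \<in> SU11" using \<gamma>h matgroupD(1)[OF \<Gamma>h(1)] by blast
  then have "lcoset \<Gamma>h (\<gamma>h ** (fh ** gh)) = lcoset \<Gamma>h (fh ** gh)"
    using \<Gamma>h(1) \<gamma>h by (simp add: lcoset_mult_member SU11_invertible)
  then show "s \<in> Spin2 \<and> lcoset \<Gamma>h (fh ** gh) = lcoset \<Gamma>h (gh ** s)"
    using s by (simp add: matrix_mul_assoc)
next
  fix s' assume s': "s' \<in> Spin2 \<and> lcoset \<Gamma>h (fh ** gh) = lcoset \<Gamma>h (gh ** s')"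
  have "fh ** gh \<in> lcoset \<Gamma>h (fh ** gh)"
    using matgroupD(2)[OF \<Gamma>h(1)] by (force simp: lcoset_def)
  then obtain B where B: "B \<in> \<Gamma>h" "fh ** gh = B ** (gh ** s')"
    using s' by (auto simp: lcoset_def)
  define D where "D = \<gamma>h ** B"
  have D: "D \<in> \<Gamma>h" "D \<in> SU11"
    using matgroupD[OF \<Gamma>h(1)] \<gamma>h B(1) by (auto simp: D_def)
  have "D ** gh ** s' = \<gamma>h ** (B ** (gh ** s'))" by (simp add: D_def matrix_mul_assoc)
  also have "\<dots> = gh ** s" using B(2) s(2) by (metis matrix_mul_assoc)
  finally have D_eq: "D ** gh ** s' = gh ** s" .
  have "s \<in> SU11" "s' \<in> SU11" using s(1) s' Spin2_subset_SU11 by auto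
  then have "eta D ** eta gh ** eta s' = eta gh ** eta s"
    using arg_cong[OF D_eq, of eta] D(2) gh by (simp add: eta_mult SU11_mult)
  then have "eta D *v (eta gh *v (eta s' *v e3)) = eta gh *v (eta s *v e3)"
    by (simp add: matrix_vector_mul_assoc matrix_mul_assoc)
  moreover have "eta s *v e3 = e3" "eta s' *v e3 = e3"
    using \<open>s \<in> SU11\<close> \<open>s' \<in> SU11\<close> s(1) s' SU11_fixes_e3_iff by blast+
  ultimately have "eta D *v (eta gh *v e3) = eta gh *v e3" by simp
  moreover have "eta D \<in> \<Gamma>" using \<Gamma>h(2) D(1) by (auto simp: bij_betw_def)
  ultimately have "eta D = eta (mat 1)" using free eta_one by simp
  then have "D = mat 1"
    using \<Gamma>h D(1) matgroupD(2)[OF \<Gamma>h(1)] by (auto simp: bij_betw_def inj_on_def)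
  then show "s' = s"
    using D_eq gh by (auto intro: invertible_mult_left_cancel SU11_invertible)
qed

lemma the_matgroup_element_eq:
  assumes \<Gamma>: "matgroup \<Gamma> SO21p"
    and free: "\<forall>\<delta>\<in>\<Gamma>. \<delta> *v x = x \<longrightarrow> \<delta> = mat 1"
    and \<gamma>: "\<gamma> \<in> \<Gamma>" "\<gamma> *v y = x"
  shows "(THE \<gamma>. \<gamma> \<in> \<Gamma> \<and> \<gamma> *v y = x) = \<gamma>"
proof (rule the_equality)
  fix \<gamma>' assume \<gamma>': "\<gamma>' \<in> \<Gamma> \<and> \<gamma>' *v y = x"
  have inv: "matrix_inv \<gamma> ** \<gamma> = mat 1"
    using matgroupD(1)[OF \<Gamma>] \<gamma>(1) by (blast intro: matrix_inv_left SO21p_invertible)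
  have "\<gamma>' ** matrix_inv \<gamma> \<in> \<Gamma>" using matgroupD(3,4)[OF \<Gamma>] \<gamma>(1) \<gamma>' by blast
  moreover have "(\<gamma>' ** matrix_inv \<gamma>) *v x = x"
    using \<gamma>' \<gamma>(2) inv by (metis matrix_vector_mul_assoc matrix_vector_mul_lid)
  ultimately have "\<gamma>' ** matrix_inv \<gamma> = mat 1" using free by blast
  then show "\<gamma>' = \<gamma>" using inv by (metis matrix_mul_assoc matrix_mul_lid matrix_mul_rid)
qed (use \<gamma> in simp)

lemma det_I_minus_dphi_rotation:
  assumes "(THE \<gamma>. \<gamma> \<in> \<Gamma> \<and> \<gamma> *v (f *v (g *v e3)) = g *v e3) = \<gamma>"
    and "matrix_inv g ** (\<gamma> ** f) ** g = lorentz_mat u 0" and "cmod u = 1"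
  shows "det_I_minus_dphi \<Gamma> f g = 4 * (Im u)^2"
proof -
  have "(Re u)^2 + (Im u)^2 = 1" using assms(3) by (simp add: cmod_power2[symmetric])
  then show ?thesis
    unfolding det_I_minus_dphi_def Let_def assms(1,2)
    by (simp add: power2_eq_square algebra_simps) algebra
qed

text \<open>No hypothesis \<open>Im u \<noteq> 0\<close> is needed: for \<open>Im u = 0\<close> both sides are 0 by the convention
  \<open>x / 0 = 0\<close>.\<close>

lemma nu_eq:
  assumes "spin_s \<Gamma>h fh gh = cdiag u (cnj u)" "det_I_minus_dphi \<Gamma> f g = 4 * (Im u)^2"
  shows "nu \<Gamma> \<Gamma>h f fh g gh = 1 / (2 * complex_of_real (Im u) * \<i>)"
proof -
  have Delta: "Delta_plus (cdiag u (cnj u)) - Delta_minus (cdiag u (cnj u)) = - 2 * \<i> * Im u"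
    by (simp add: Delta_plus_def Delta_minus_def cdiag_def complex_eq_iff)
  show ?thesis
    unfolding nu_def Let_def assms Delta
    by (cases "Im u = 0") (simp_all add: field_simps power2_eq_square)
qed

theorem theorem10p1:
  fixes \<Gamma> :: "(real^3^3) set" and \<Gamma>h :: "(complex^2^2) set"
    and f g \<gamma> :: "real^3^3" and fh gh \<gamma>h :: "complex^2^2" and x :: "real^3"
  assumes Gamma: "cocompact_torsionfree_lattice \<Gamma>"
    and Gammah: "matgroup \<Gamma>h SU11" "bij_betw eta \<Gamma>h \<Gamma>"
    and f: "f \<in> SO21p" "normalizes f \<Gamma>"
    and fh: "fh \<in> SU11" "eta fh = f" "normalizes fh \<Gamma>h"
    and x: "x \<in> H2"
    and fixed: "\<exists>\<delta>\<in>\<Gamma>. \<delta> *v (f *v x) = x"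
    and isolated: "\<exists>e>0. \<forall>y\<in>H2. dist y x < e \<and> (\<exists>\<delta>\<in>\<Gamma>. \<delta> *v (f *v y) = y)
                        \<longrightarrow> (\<exists>\<delta>\<in>\<Gamma>. \<delta> *v y = x)"
    and g: "g \<in> SO21p" "g *v e3 = x"
    and gh: "gh \<in> SU11" "eta gh = g"
    and \<gamma>: "\<gamma> \<in> \<Gamma>" "\<gamma> *v (f *v x) = x"
    and \<gamma>h: "\<gamma>h \<in> \<Gamma>h" "eta \<gamma>h = \<gamma>"
  shows "\<exists>u. cmod u = 1 \<and> matrix_inv gh ** \<gamma>h ** fh ** gh = cdiag u (cnj u)
            \<and> nu \<Gamma> \<Gamma>h f fh g gh = 1 / (2 * complex_of_real (Im u) * \<i>)"
proof -
  have \<Gamma>h_SU11: "\<Gamma>h \<subseteq> SU11" using Gammah(1) by (simp add: matgroup_def)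
  then have "\<Gamma> \<subseteq> eta ` SU11" using Gammah(2) by (auto simp: bij_betw_def)
  then have free: "\<forall>\<delta>\<in>\<Gamma>. \<delta> *v x = x \<longrightarrow> \<delta> = mat 1"
    using lattice_acts_freely[OF Gamma _ gh(1)] gh(2) g(2) by blast
  define s where "s = matrix_inv gh ** \<gamma>h ** fh ** gh"
  have \<gamma>h_SU11: "\<gamma>h \<in> SU11" using \<Gamma>h_SU11 \<gamma>h(1) by blast
  have s: "s \<in> SU11" "eta s = matrix_inv g ** (\<gamma> ** f) ** g"
    using gh fh \<gamma>h \<gamma>h_SU11
    by (simp_all add: s_def SU11_mult SU11_matrix_inv eta_mult eta_matrix_inv matrix_mul_assoc)
  have "eta s *v e3 = matrix_inv g *v (\<gamma> *v (f *v x))"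
    by (simp add: s(2) g(2)[symmetric] matrix_vector_mul_assoc matrix_mul_assoc)
  also have "\<dots> = e3"
    using \<gamma>(2) g SO21p_invertible matrix_inv_left by (metis matrix_vector_mul_assoc matrix_vector_mul_lid)
  finally have "s \<in> Spin2" using s(1) SU11_fixes_e3_iff by blast
  then obtain u where u: "cmod u = 1" "s = cdiag u (cnj u)" by (auto simp: Spin2_def)
  have "gh ** s = \<gamma>h ** fh ** gh"
    using gh(1) by (simp add: s_def matrix_mul_assoc matrix_inv_right SU11_invertible)
  then have "spin_s \<Gamma>h fh gh = s"
    using spin_s_eqI[OF Gammah _ gh(1) \<gamma>h(1) \<open>s \<in> Spin2\<close>] free gh(2) g(2) by simp
  moreover have "det_I_minus_dphi \<Gamma> f g = 4 * (Im u)^2"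
    using the_matgroup_element_eq[OF _ free \<gamma>] Gamma s(2) u eta_cdiag g(2)
    by (intro det_I_minus_dphi_rotation) (auto simp: cocompact_torsionfree_lattice_def)
  ultimately have "nu \<Gamma> \<Gamma>h f fh g gh = 1 / (2 * complex_of_real (Im u) * \<i>)"
    using u(2) by (intro nu_eq) simp_all
  then show ?thesis using u unfolding s_def by blast
qed

end
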